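(* Let $q\in\mathcal{K}\setminus\{0\}$, let $(\mathcal{A},\succ,\prec)$ be a $q$-generalized dendriform algebra with associated $q$-generalized associative algebra $(\mathcal{A},\ast)$, and let $(l_\succ,r_\succ,l_\prec,r_\prec,V)$ be a bimodule of $(\mathcal{A},\succ,\prec)$. Define $l^*_\succ,r^*_\succ,l^*_\prec,r^*_\prec:\mathcal{A}\to gl(V^* )$ by $\langle f^*(x)a^*,y\rangle=\langle f(x)y,a^*\rangle$ for $f\in\{l_\succ,r_\succ,l_\prec,r_\prec\}$. Then: (1) $(q^{-2}(r^*_\succ+r^*_\prec),\,-q^{2}l^*_\prec,\,-q^{-2}r^*_\succ,\,q^{2}(l^*_\succ+l^*_\prec),\,V^* )$ is a bimodule of $(\mathcal{A},\succ,\prec)$; (2) $(q^{-2}(r^*_\succ+r^*_\prec),0,0,q^2(l^*_\succ+l^*_\prec),V^* )$ and $(q^{-2}r^*_\prec,0,0,q^2l^*_\succ,V^* )$ are bimodules of $(\mathcal{A},\succ,\prec)$; (3) $(q^{-2}(r^*_\succ+r^*_\prec),q^2(l^*_\succ+l^*_\prec),V^* )$ and $(q^{-2}r^*_\prec,q^2l^*_\succ,V^* )$ are bimodules of $(\mathcal{A},\ast)$; (4) the $q$-generalized dendriform algebras $\mathcal{A}\ltimes_{q^{-2}(r^*_\succ+r^*_\prec),-q^2l^*_\prec,-q^{-2}r^*_\succ,q^2(l^*_\succ+l^*_\prec)}V^*$ and $\mathcal{A}\ltimes_{q^{-2}r^*_\prec,0,0,q^2l^*_\succ}V^*$ have the same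 associated $q$-generalized associative algebra $\mathcal{A}\ltimes_{q^{-2}r^*_\prec,q^2l^*_\succ}V^*$.
   Context: A $q$-generalized dendriform algebra is a vector space $\mathcal{A}$ with bilinear products $\prec,\succ$ such that, with $x\ast y=x\prec y+x\succ y$: $(x\prec y)\prec z=q\,x\prec(y\ast z)$, $(x\succ y)\prec z=q\,x\succ(y\prec z)$, $x\succ(y\succ z)=q^{-1}(x\ast y)\succ z$; $(\mathcal{A},\ast)$ is then a $q$-generalized associative algebra ($(x\ast y)\ast z=q\,x\ast(y\ast z)$). A bimodule $(l,r,V)$ of $(\mathcal{A},\ast)$: $l,r:\mathcal{A}\to gl(V)$ linear with $l(x\ast y)=q\,l(x)l(y)$, $r(x\ast y)=q^{-1}r(y)r(x)$, $l(x)r(y)=q^{-1}r(y)l(x)$; $\mathcal{A}\ltimes_{l,r}V$ is $\mathcal{A}\oplus V$ with $(x+u)\ast(y+v)=x\ast y+l(x)v+r(y)u$. A bimodule of $(\mathcal{A},\succ,\prec)$ is a tuple $(l_\succ,r_\succ,l_\prec,r_\prec,V)$ of linear maps $\mathcal{A}\to gl(V)$ such that, with $l_\ast=l_\succ+l_\prec$, $r_\ast=r_\succ+r_\prec$: $l_\prec(x\prec y)=q\,l_\prec(x)l_\ast(y)$, $r_\prec(x)l_\prec(y)=q\,l_\prec(y)r_\ast(x)$, $r_\prec(x)r_\prec(y)=q\,r_\prec(y\ast x)$, $l_\prec(x\succ y)=q\,l_\succ(x)l_\prec(y)$, $r_\prec(x)l_\succ(y)=q\,l_\succ(y)r_\prec(x)$,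 $r_\prec(x)r_\succ(y)=q\,r_\succ(y\prec x)$, $l_\succ(x\ast y)=q\,l_\succ(x)l_\succ(y)$, $r_\succ(x)l_\ast(y)=q\,l_\succ(y)r_\succ(x)$, $r_\succ(x)r_\ast(y)=q\,r_\succ(y\succ x)$. $\mathcal{A}\ltimes_{l_\succ,r_\succ,l_\prec,r_\prec}V$ denotes $\mathcal{A}\oplus V$ with $(x+u)\succ(y+v)=x\succ y+l_\succ(x)v+r_\succ(y)u$, $(x+u)\prec(y+v)=x\prec y+l_\prec(x)v+r_\prec(y)u$. *)

theory Defs
  imports Main HOL.Vector_Spaces "HOL-Library.Function_Algebras" "HOL-Library.Product_Plus"
begin

text \<open>Ambient spaces are types carrying an addition (ab_group_add) and a scalar
multiplication by a field 'k; subspaces are given as carrier sets, so that the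
algebraic dual (linear functionals) can be treated as a carrier inside the
function space.\<close>

definition subspace_on :: "'w::ab_group_add set \<Rightarrow> ('k::field \<Rightarrow> 'w \<Rightarrow> 'w) \<Rightarrow> bool" where
  "subspace_on W s \<equiv> 0 \<in> W \<and> (\<forall>u\<in>W. \<forall>v\<in>W. u + v \<in> W) \<and> (\<forall>c. \<forall>u\<in>W. s c u \<in> W)"

definition lin_endo :: "'w::ab_group_add set \<Rightarrow> ('k::field \<Rightarrow> 'w \<Rightarrow> 'w) \<Rightarrow> ('w \<Rightarrow> 'w) \<Rightarrow> bool" where
  "lin_endo W s f \<equiv> (\<forall>u\<in>W. f u \<in> W) \<and> (\<forall>u\<in>W. \<forall>v\<in>W. f (u + v) = f u + f v)
     \<and> (\<forall>c. \<forall>u\<in>W. f (s c u) = s c (f u))"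

definition bilinear_on :: "'a::ab_group_add set \<Rightarrow> ('k::field \<Rightarrow> 'a \<Rightarrow> 'a) \<Rightarrow> ('a \<Rightarrow> 'a \<Rightarrow> 'a) \<Rightarrow> bool" where
  "bilinear_on S s m \<equiv> (\<forall>x\<in>S. \<forall>y\<in>S. m x y \<in> S)
     \<and> (\<forall>x\<in>S. \<forall>y\<in>S. \<forall>z\<in>S. m (x + y) z = m x z + m y z \<and> m z (x + y) = m z x + m z y)
     \<and> (\<forall>c. \<forall>x\<in>S. \<forall>y\<in>S. m (s c x) y = s c (m x y) \<and> m x (s c y) = s c (m x y))"

definition qassoc_alg :: "'k::field \<Rightarrow> 'a::ab_group_add set \<Rightarrow> ('k \<Rightarrow> 'a \<Rightarrow> 'a) \<Rightarrow> ('a \<Rightarrow> 'a \<Rightarrow> 'a) \<Rightarrow> bool" where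
  "qassoc_alg q S s m \<equiv> subspace_on S s \<and> bilinear_on S s m \<and>
     (\<forall>x\<in>S. \<forall>y\<in>S. \<forall>z\<in>S. m (m x y) z = s q (m x (m y z)))"

definition dast :: "('a::plus \<Rightarrow> 'a \<Rightarrow> 'a) \<Rightarrow> ('a \<Rightarrow> 'a \<Rightarrow> 'a) \<Rightarrow> 'a \<Rightarrow> 'a \<Rightarrow> 'a" where
  "dast succ prec x y = prec x y + succ x y"

definition qdend_alg :: "'k::field \<Rightarrow> 'a::ab_group_add set \<Rightarrow> ('k \<Rightarrow> 'a \<Rightarrow> 'a)
    \<Rightarrow> ('a \<Rightarrow> 'a \<Rightarrow> 'a) \<Rightarrow> ('a \<Rightarrow> 'a \<Rightarrow> 'a) \<Rightarrow> bool" where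
  "qdend_alg q S s succ prec \<equiv> subspace_on S s \<and> bilinear_on S s succ \<and> bilinear_on S s prec \<and>
     (\<forall>x\<in>S. \<forall>y\<in>S. \<forall>z\<in>S.
        prec (prec x y) z = s q (prec x (dast succ prec y z)) \<and>
        prec (succ x y) z = s q (succ x (prec y z)) \<and>
        succ x (succ y z) = s (inverse q) (succ (dast succ prec x y) z))"

definition rep_map :: "'a::ab_group_add set \<Rightarrow> ('k::field \<Rightarrow> 'a \<Rightarrow> 'a) \<Rightarrow> 'w::ab_group_add set
    \<Rightarrow> ('k \<Rightarrow> 'w \<Rightarrow> 'w) \<Rightarrow> ('a \<Rightarrow> 'w \<Rightarrow> 'w) \<Rightarrow> bool" where
  "rep_map S s W sW l \<equiv> (\<forall>x\<in>S. lin_endo W sW (l x)) \<and>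
     (\<forall>x\<in>S. \<forall>y\<in>S. \<forall>w\<in>W. l (x + y) w = l x w + l y w) \<and>
     (\<forall>c. \<forall>x\<in>S. \<forall>w\<in>W. l (s c x) w = sW c (l x w))"

definition qassoc_bimod :: "'k::field \<Rightarrow> 'a::ab_group_add set \<Rightarrow> ('k \<Rightarrow> 'a \<Rightarrow> 'a) \<Rightarrow> ('a \<Rightarrow> 'a \<Rightarrow> 'a)
    \<Rightarrow> 'w::ab_group_add set \<Rightarrow> ('k \<Rightarrow> 'w \<Rightarrow> 'w) \<Rightarrow> ('a \<Rightarrow> 'w \<Rightarrow> 'w) \<Rightarrow> ('a \<Rightarrow> 'w \<Rightarrow> 'w) \<Rightarrow> bool" where
  "qassoc_bimod q S s m W sW l r \<equiv> subspace_on W sW \<and> rep_map S s W sW l \<and> rep_map S s W sW r \<and>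
     (\<forall>x\<in>S. \<forall>y\<in>S. \<forall>w\<in>W.
        l (m x y) w = sW q (l x (l y w)) \<and>
        r (m x y) w = sW (inverse q) (r y (r x w)) \<and>
        l x (r y w) = sW (inverse q) (r y (l x w)))"

definition qdend_bimod :: "'k::field \<Rightarrow> 'a::ab_group_add set \<Rightarrow> ('k \<Rightarrow> 'a \<Rightarrow> 'a)
    \<Rightarrow> ('a \<Rightarrow> 'a \<Rightarrow> 'a) \<Rightarrow> ('a \<Rightarrow> 'a \<Rightarrow> 'a)
    \<Rightarrow> 'w::ab_group_add set \<Rightarrow> ('k \<Rightarrow> 'w \<Rightarrow> 'w)
    \<Rightarrow> ('a \<Rightarrow> 'w \<Rightarrow> 'w) \<Rightarrow> ('a \<Rightarrow> 'w \<Rightarrow> 'w) \<Rightarrow> ('a \<Rightarrow> 'w \<Rightarrow> 'w) \<Rightarrow> ('a \<Rightarrow> 'w \<Rightarrow> 'w) \<Rightarrow> bool" where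
  "qdend_bimod q S s succ prec W sW ls rs lp rp \<equiv>
     subspace_on W sW \<and> rep_map S s W sW ls \<and> rep_map S s W sW rs \<and>
     rep_map S s W sW lp \<and> rep_map S s W sW rp \<and>
     (let ast = dast succ prec; la = (\<lambda>x w. ls x w + lp x w); ra = (\<lambda>x w. rs x w + rp x w) in
     (\<forall>x\<in>S. \<forall>y\<in>S. \<forall>w\<in>W.
        lp (prec x y) w = sW q (lp x (la y w)) \<and>
        rp x (lp y w) = sW q (lp y (ra x w)) \<and>
        rp x (rp y w) = sW q (rp (ast y x) w) \<and>
        lp (succ x y) w = sW q (ls x (lp y w)) \<and>
        rp x (ls y w) = sW q (ls y (rp x w)) \<and>
        rp x (rs y w) = sW q (rs (prec y x) w) \<and>
        ls (ast x y) w = sW q (ls x (ls y w)) \<and>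
        rs x (la y w) = sW q (ls y (rs x w)) \<and>
        rs x (ra y w) = sW q (rs (succ y x) w)))"

definition is_vspace :: "('k::field \<Rightarrow> 'w::ab_group_add \<Rightarrow> 'w) \<Rightarrow> bool" where
  "is_vspace s \<equiv> vector_space s"

definition dual_space :: "('k::field \<Rightarrow> 'v::ab_group_add \<Rightarrow> 'v) \<Rightarrow> ('v \<Rightarrow> 'k) set" where
  "dual_space sV = {f. (\<forall>u v. f (u + v) = f u + f v) \<and> (\<forall>c u. f (sV c u) = c * f u)}"

definition dscale :: "'k::field \<Rightarrow> ('v \<Rightarrow> 'k) \<Rightarrow> ('v \<Rightarrow> 'k)" where
  "dscale c f = (\<lambda>v. c * f v)"

definition dual_rep :: "('a \<Rightarrow> 'v \<Rightarrow> 'v) \<Rightarrow> 'a \<Rightarrow> ('v \<Rightarrow> 'k) \<Rightarrow> ('v \<Rightarrow> 'k)" where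
  "dual_rep f x a = (\<lambda>y. a (f x y))"

definition pscale :: "('k \<Rightarrow> 'a \<Rightarrow> 'a) \<Rightarrow> ('k \<Rightarrow> 'w \<Rightarrow> 'w) \<Rightarrow> 'k \<Rightarrow> 'a \<times> 'w \<Rightarrow> 'a \<times> 'w" where
  "pscale s sW c p = (s c (fst p), sW c (snd p))"

definition sd_prod :: "('a \<Rightarrow> 'a \<Rightarrow> 'a) \<Rightarrow> ('a \<Rightarrow> 'w \<Rightarrow> 'w) \<Rightarrow> ('a \<Rightarrow> 'w \<Rightarrow> 'w)
    \<Rightarrow> 'a \<times> 'w \<Rightarrow> 'a \<times> 'w \<Rightarrow> 'a \<times> ('w::plus)" where
  "sd_prod m l r p p' = (m (fst p) (fst p'), l (fst p) (snd p') + r (fst p') (snd p))"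

end

theory Submission
  imports Defs
begin

text \<open>Dualising reverses composition: \<open>f\<^sup>*(x) g\<^sup>*(y) a = a \<circ> g(y) \<circ> f(x)\<close>. Hence each of the
nine identities of the dual quadruple in (1) is, up to powers of \<open>q\<close>, the adjoint of
one identity of the given bimodule. The other claims are formal consequences of (1):
for every dendriform bimodule both \<open>(l\<^sub>\<succ>, r\<^sub>\<prec>)\<close> and \<open>(l\<^sub>\<succ> + l\<^sub>\<prec>, r\<^sub>\<succ> + r\<^sub>\<prec>)\<close> are bimodules of the
associated algebra, which gives (3); every bimodule \<open>(l, r)\<close> of \<open>(\<A>, \<ast>)\<close> gives the dendriform
bimodule \<open>(l, 0, 0, r)\<close>, which gives (2); and the semidirect product with a dendriform
bimodule is a dendriform algebra whose associated product is the semidirect product with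
\<open>(l\<^sub>\<succ> + l\<^sub>\<prec>, r\<^sub>\<succ> + r\<^sub>\<prec>)\<close>, which for both algebras in (4) is \<open>(q\<^sup>-\<^sup>2 r\<^sup>*\<^sub>\<prec>, q\<^sup>2 l\<^sup>*\<^sub>\<succ>)\<close>.\<close>

lemma rep_mapD:
  assumes "rep_map UNIV s W sW f"
  shows "u \<in> W \<Longrightarrow> f x u \<in> W"
    and "u \<in> W \<Longrightarrow> v \<in> W \<Longrightarrow> f x (u + v) = f x u + f x v"
    and "u \<in> W \<Longrightarrow> f x (sW c u) = sW c (f x u)"
    and "u \<in> W \<Longrightarrow> f (x + y) u = f x u + f y u"
    and "u \<in> W \<Longrightarrow> f (s c x) u = sW c (f x u)"
  using assms unfolding rep_map_def lin_endo_def by auto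

lemma subspace_onD:
  assumes "subspace_on W s"
  shows "0 \<in> W" and "u \<in> W \<Longrightarrow> v \<in> W \<Longrightarrow> u + v \<in> W" and "u \<in> W \<Longrightarrow> s c u \<in> W"
  using assms unfolding subspace_on_def by auto

lemma rep_map_zero:
  assumes "vector_space sW" "subspace_on W sW"
  shows "rep_map S s W sW (\<lambda>x w. 0)"
proof -
  interpret vector_space sW by fact
  show ?thesis using assms(2) unfolding rep_map_def lin_endo_def subspace_on_def by auto
qed

lemma rep_map_add:
  assumes "vector_space sW" "subspace_on W sW" "rep_map S s W sW f" "rep_map S s W sW g"
  shows "rep_map S s W sW (\<lambda>x w. f x w + g x w)"
proof -
  interpret vector_space sW by fact
  show ?thesis using assms(2-) unfolding rep_map_def lin_endo_def subspace_on_def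
    by (auto simp: algebra_simps)
qed

lemma rep_map_scale:
  assumes "vector_space sW" "subspace_on W sW" "rep_map S s W sW f"
  shows "rep_map S s W sW (\<lambda>x w. sW c (f x w))"
proof -
  interpret vector_space sW by fact
  show ?thesis using assms(2-) unfolding rep_map_def lin_endo_def subspace_on_def
    by (auto simp: scale_right_distrib mult.commute)
qed

lemma vector_space_dscale: "vector_space (dscale :: 'k::field \<Rightarrow> ('v \<Rightarrow> 'k) \<Rightarrow> 'v \<Rightarrow> 'k)"
  by unfold_locales (auto simp: dscale_def fun_eq_iff algebra_simps)

lemma vector_space_pscale:
  assumes "vector_space s" "vector_space t"
  shows "vector_space (pscale s t)"
proof -
  interpret S: vector_space s by fact
  interpret T: vector_space t by fact
  show ?thesis
    by unfold_locales (auto simp: pscale_def S.scale_right_distrib T.scale_right_distrib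
        S.scale_left_distrib T.scale_left_distrib)
qed

lemma qdend_bimodD:
  assumes "qdend_bimod q S s succ prec W sW ls rs lp rp"
  shows "subspace_on W sW" "rep_map S s W sW ls" "rep_map S s W sW rs"
    "rep_map S s W sW lp" "rep_map S s W sW rp"
    and "\<lbrakk>x \<in> S; y \<in> S; w \<in> W\<rbrakk> \<Longrightarrow> lp (prec x y) w = sW q (lp x (ls y w + lp y w))"
    and "\<lbrakk>x \<in> S; y \<in> S; w \<in> W\<rbrakk> \<Longrightarrow> rp x (lp y w) = sW q (lp y (rs x w + rp x w))"
    and "\<lbrakk>x \<in> S; y \<in> S; w \<in> W\<rbrakk> \<Longrightarrow> rp x (rp y w) = sW q (rp (dast succ prec y x) w)"
    and "\<lbrakk>x \<in> S; y \<in> S; w \<in> W\<rbrakk> \<Longrightarrow> lp (succ x y) w = sW q (ls x (lp y w))"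
    and "\<lbrakk>x \<in> S; y \<in> S; w \<in> W\<rbrakk> \<Longrightarrow> rp x (ls y w) = sW q (ls y (rp x w))"
    and "\<lbrakk>x \<in> S; y \<in> S; w \<in> W\<rbrakk> \<Longrightarrow> rp x (rs y w) = sW q (rs (prec y x) w)"
    and "\<lbrakk>x \<in> S; y \<in> S; w \<in> W\<rbrakk> \<Longrightarrow> ls (dast succ prec x y) w = sW q (ls x (ls y w))"
    and "\<lbrakk>x \<in> S; y \<in> S; w \<in> W\<rbrakk> \<Longrightarrow> rs x (ls y w + lp y w) = sW q (ls y (rs x w))"
    and "\<lbrakk>x \<in> S; y \<in> S; w \<in> W\<rbrakk> \<Longrightarrow> rs x (rs y w + rp y w) = sW q (rs (succ y x) w)"
  using assms unfolding qdend_bimod_def Let_def by auto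

lemma qassoc_bimodD:
  assumes "qassoc_bimod q S s m W sW l r"
  shows "subspace_on W sW" "rep_map S s W sW l" "rep_map S s W sW r"
    and "\<lbrakk>x \<in> S; y \<in> S; w \<in> W\<rbrakk> \<Longrightarrow> l (m x y) w = sW q (l x (l y w))"
    and "\<lbrakk>x \<in> S; y \<in> S; w \<in> W\<rbrakk> \<Longrightarrow> r (m x y) w = sW (inverse q) (r y (r x w))"
    and "\<lbrakk>x \<in> S; y \<in> S; w \<in> W\<rbrakk> \<Longrightarrow> l x (r y w) = sW (inverse q) (r y (l x w))"
  using assms unfolding qassoc_bimod_def by auto

lemma qdend_bimod_imp_qassoc_bimod_succ_prec:
  assumes "q \<noteq> 0" "vector_space sW"
    and M: "qdend_bimod q UNIV s succ prec W sW ls rs lp rp"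
  shows "qassoc_bimod q UNIV s (dast succ prec) W sW ls rp"
proof -
  interpret vector_space sW by fact
  note M = qdend_bimodD[OF M]
  have "rp (dast succ prec x y) w = sW (inverse q) (rp y (rp x w))"
    and "ls x (rp y w) = sW (inverse q) (rp y (ls x w))" if "w \<in> W" for x y w
    using M(8)[of y x w] M(10)[of y x w] that \<open>q \<noteq> 0\<close> by simp_all
  then show ?thesis
    unfolding qassoc_bimod_def using M(1,2,5,12) by blast
qed

lemma qdend_bimod_imp_qassoc_bimod_sum:
  assumes "q \<noteq> 0" "vector_space sW"
    and M: "qdend_bimod q UNIV s succ prec W sW ls rs lp rp"
  shows "qassoc_bimod q UNIV s (dast succ prec) W sW
           (\<lambda>x w. ls x w + lp x w) (\<lambda>x w. rs x w + rp x w)"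
proof -
  interpret vector_space sW by fact
  note M = qdend_bimodD[OF M]
  note W = subspace_onD[OF M(1)]
  note lin = rep_mapD[OF M(2)] rep_mapD[OF M(3)] rep_mapD[OF M(4)] rep_mapD[OF M(5)]
  let ?la = "\<lambda>x w. ls x w + lp x w" and ?ra = "\<lambda>x w. rs x w + rp x w"
  have left: "?la (dast succ prec x y) w = sW q (?la x (?la y w))"
    and right: "sW q (?ra (dast succ prec x y) w) = ?ra y (?ra x w)"
    and middle: "?ra y (?la x w) = sW q (?la x (?ra y w))"
    if w: "w \<in> W" for x y w
  proof -
    have "?la (dast succ prec x y) w = ls (dast succ prec x y) w + lp (prec x y) w + lp (succ x y) w"
      using w by (simp add: lin dast_def add.assoc)
    also have "\<dots> = sW q (?la x (?la y w))"
      using w by (simp add: M(6,9,12) lin W scale_right_distrib[symmetric] add_ac)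
    finally show "?la (dast succ prec x y) w = sW q (?la x (?la y w))" .
    have "?ra y (?ra x w) = rs y (?ra x w) + rp y (rs x w) + rp y (rp x w)"
      using w by (simp add: lin W add.assoc)
    also have "\<dots> = sW q (rs (succ x y) w) + sW q (rs (prec x y) w) + sW q (rp (dast succ prec x y) w)"
      using w by (simp only: M(8,11,14) UNIV_I)
    also have "\<dots> = sW q (?ra (dast succ prec x y) w)"
      using w by (simp add: lin W dast_def scale_right_distrib add_ac)
    finally show "sW q (?ra (dast succ prec x y) w) = ?ra y (?ra x w)" ..
    have "?ra y (?la x w) = rs y (?la x w) + rp y (ls x w) + rp y (lp x w)"
      using w by (simp add: lin W add.assoc)
    also have "\<dots> = sW q (ls x (rs y w)) + sW q (ls x (rp y w)) + sW q (lp x (?ra y w))"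
      using w by (simp only: M(7,10,13) UNIV_I)
    also have "\<dots> = sW q (?la x (?ra y w))"
      using w by (simp add: lin W scale_right_distrib add_ac)
    finally show "?ra y (?la x w) = sW q (?la x (?ra y w))" .
  qed
  show ?thesis
    unfolding qassoc_bimod_def
  proof (intro conjI ballI)
    show "rep_map UNIV s W sW ?la" "rep_map UNIV s W sW ?ra"
      using rep_map_add[OF \<open>vector_space sW\<close> M(1)] M(2-5) by blast+
  next
    fix x y w assume "w \<in> W"
    then show "?la (dast succ prec x y) w = sW q (?la x (?la y w))"
      and "?ra (dast succ prec x y) w = sW (inverse q) (?ra y (?ra x w))"
      and "?la x (?ra y w) = sW (inverse q) (?ra y (?la x w))"
      using left right[symmetric] middle \<open>q \<noteq> 0\<close> by simp_all
  qed (fact M(1))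
qed

lemma qassoc_bimod_imp_qdend_bimod:
  assumes "q \<noteq> 0" "vector_space sW"
    and M: "qassoc_bimod q UNIV s (dast succ prec) W sW l r"
  shows "qdend_bimod q UNIV s succ prec W sW l (\<lambda>x w. 0) (\<lambda>x w. 0) r"
proof -
  interpret vector_space sW by fact
  note M = qassoc_bimodD[OF M]
  note W = subspace_onD[OF M(1)]
  have l0: "l x 0 = 0" and r0: "r x 0 = 0" for x
    using rep_mapD(2)[OF M(2) W(1) W(1), of x] rep_mapD(2)[OF M(3) W(1) W(1), of x] by simp_all
  have "r x (r y w) = sW q (r (dast succ prec y x) w)"
    and "r x (l y w) = sW q (l y (r x w))" if "w \<in> W" for x y w
    using M(5)[of y x w] M(6)[of y x w] that \<open>q \<noteq> 0\<close> by simp_all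
  then show ?thesis
    unfolding qdend_bimod_def Let_def
    using M(1-4) rep_map_zero[OF \<open>vector_space sW\<close> M(1)] by (simp add: l0 r0)
qed

lemma bilinear_onD:
  assumes "bilinear_on S s m" and "x \<in> S" "y \<in> S"
  shows "m x y \<in> S"
    and "z \<in> S \<Longrightarrow> m (x + y) z = m x z + m y z"
    and "z \<in> S \<Longrightarrow> m z (x + y) = m z x + m z y"
    and "m (s c x) y = s c (m x y)"
    and "m x (s c y) = s c (m x y)"
  using assms unfolding bilinear_on_def by auto

lemma qdend_algD:
  assumes "qdend_alg q S s succ prec"
  shows "subspace_on S s" "bilinear_on S s succ" "bilinear_on S s prec"
    and "\<lbrakk>x \<in> S; y \<in> S; z \<in> S\<rbrakk> \<Longrightarrow> prec (prec x y) z = s q (prec x (dast succ prec y z))"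
    and "\<lbrakk>x \<in> S; y \<in> S; z \<in> S\<rbrakk> \<Longrightarrow> prec (succ x y) z = s q (succ x (prec y z))"
    and "\<lbrakk>x \<in> S; y \<in> S; z \<in> S\<rbrakk> \<Longrightarrow> succ x (succ y z) = s (inverse q) (succ (dast succ prec x y) z)"
  using assms unfolding qdend_alg_def by auto

lemma bilinear_on_dast:
  assumes "vector_space s" "bilinear_on S s succ" "bilinear_on S s prec" "subspace_on S s"
  shows "bilinear_on S s (dast succ prec)"
proof -
  interpret vector_space s by fact
  show ?thesis
    using subspace_onD[OF assms(4)] bilinear_onD[OF assms(2)] bilinear_onD[OF assms(3)]
    unfolding bilinear_on_def dast_def by (auto simp: scale_right_distrib add_ac)
qed

lemma qdend_alg_imp_qassoc_alg:
  assumes "q \<noteq> 0" "vector_space s"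
    and D: "qdend_alg q S s succ prec"
  shows "qassoc_alg q S s (dast succ prec)"
proof -
  interpret vector_space s by fact
  note D = qdend_algD[OF D]
  note bs = bilinear_onD[OF D(2)] and bp = bilinear_onD[OF D(3)]
  have "dast succ prec (dast succ prec x y) z = s q (dast succ prec x (dast succ prec y z))"
    if xyz: "x \<in> S" "y \<in> S" "z \<in> S" for x y z
  proof -
    have xy: "prec x y \<in> S" "succ x y \<in> S" and yz: "prec y z \<in> S" "succ y z \<in> S"
      using bs(1) bp(1) xyz by blast+
    have "dast succ prec (dast succ prec x y) z
       = prec (prec x y) z + prec (succ x y) z + succ (dast succ prec x y) z"
      using xyz xy by (simp add: dast_def bp(2))
    also have "\<dots> = s q (prec x (dast succ prec y z)) + s q (succ x (prec y z)) + s q (succ x (succ y z))"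
      using D(4,5) D(6)[of x y z] xyz \<open>q \<noteq> 0\<close> by simp
    also have "\<dots> = s q (dast succ prec x (dast succ prec y z))"
      using xyz yz by (simp add: dast_def bs(3) scale_right_distrib add_ac)
    finally show ?thesis .
  qed
  then show ?thesis
    unfolding qassoc_alg_def
    using D(1) bilinear_on_dast[OF \<open>vector_space s\<close> D(2,3,1)] by blast
qed

lemma bilinear_on_sd_prod:
  assumes "vector_space sW" "subspace_on W sW"
    and m: "bilinear_on UNIV s m" and l: "rep_map UNIV s W sW l" and r: "rep_map UNIV s W sW r"
  shows "bilinear_on (UNIV \<times> W) (pscale s sW) (sd_prod m l r)"
proof -
  interpret vector_space sW by fact
  note W = subspace_onD[OF assms(2)] and mm = bilinear_onD[OF m UNIV_I UNIV_I]
  note lin = rep_mapD[OF l] rep_mapD[OF r]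
  show ?thesis
    unfolding bilinear_on_def sd_prod_def pscale_def
    by (auto simp: mem_Times_iff W lin mm scale_right_distrib add_ac)
qed

lemma sd_prod_qdend_identities:
  assumes "q \<noteq> 0" "vector_space sW"
    and D: "qdend_alg q UNIV s succ prec"
    and M: "qdend_bimod q UNIV s succ prec W sW ls rs lp rp"
    and uvw: "u \<in> W" "v \<in> W" "w \<in> W"
  defines "succ' \<equiv> sd_prod succ ls rs" and "prec' \<equiv> sd_prod prec lp rp"
  shows "prec' (prec' (x, u) (y, v)) (z, w)
      = pscale s sW q (prec' (x, u) (dast succ' prec' (y, v) (z, w)))"
    and "prec' (succ' (x, u) (y, v)) (z, w)
      = pscale s sW q (succ' (x, u) (prec' (y, v) (z, w)))"
    and "succ' (x, u) (succ' (y, v) (z, w))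
      = pscale s sW (inverse q) (succ' (dast succ' prec' (x, u) (y, v)) (z, w))"
proof -
  interpret vector_space sW by fact
  note A = qdend_algD[OF D] and M = qdend_bimodD[OF M]
  note W = subspace_onD[OF M(1)]
  note lin = rep_mapD[OF M(2)] rep_mapD[OF M(3)] rep_mapD[OF M(4)] rep_mapD[OF M(5)]
  have "lp (prec x y) w + rp z (lp x v + rp y u)
      = sW q (lp x (ls y w + lp y w)) + sW q (lp x (rs z v + rp z v)) + sW q (rp (dast succ prec y z) u)"
    using uvw by (simp add: M(6,7,8) lin add.assoc)
  also have "\<dots> = sW q (lp x (lp y w + rp z v + (ls y w + rs z v)) + rp (prec y z + succ y z) u)"
    using uvw by (simp add: lin W dast_def scale_right_distrib add_ac)
  finally show "prec' (prec' (x, u) (y, v)) (z, w)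
      = pscale s sW q (prec' (x, u) (dast succ' prec' (y, v) (z, w)))"
    by (simp add: succ'_def prec'_def sd_prod_def pscale_def dast_def A(4))
  have "lp (succ x y) w + rp z (ls x v + rs y u)
      = sW q (ls x (lp y w)) + sW q (ls x (rp z v)) + sW q (rs (prec y z) u)"
    using uvw by (simp add: M(9,10,11) lin add.assoc)
  also have "\<dots> = sW q (ls x (lp y w + rp z v) + rs (prec y z) u)"
    using uvw by (simp add: lin W scale_right_distrib)
  finally show "prec' (succ' (x, u) (y, v)) (z, w)
      = pscale s sW q (succ' (x, u) (prec' (y, v) (z, w)))"
    by (simp add: succ'_def prec'_def sd_prod_def pscale_def A(5))
  have "ls (prec x y + succ x y) w + rs z (lp x v + rp y u + (ls x v + rs y u))
      = ls (dast succ prec x y) w + rs z (ls x v + lp x v) + rs z (rs y u + rp y u)"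
    using uvw by (simp add: lin W dast_def add_ac)
  also have "\<dots> = sW q (ls x (ls y w)) + sW q (ls x (rs z v)) + sW q (rs (succ y z) u)"
    using uvw by (simp only: M(12,13,14) UNIV_I)
  also have "\<dots> = sW q (ls x (ls y w) + ls x (rs z v) + rs (succ y z) u)"
    by (simp add: scale_right_distrib)
  finally show "succ' (x, u) (succ' (y, v) (z, w))
      = pscale s sW (inverse q) (succ' (dast succ' prec' (x, u) (y, v)) (z, w))"
    using \<open>q \<noteq> 0\<close>
    by (simp add: succ'_def prec'_def sd_prod_def pscale_def dast_def A(6) lin uvw)
qed

lemma qdend_alg_sd_prod:
  assumes "q \<noteq> 0" "vector_space sW"
    and D: "qdend_alg q UNIV s succ prec"
    and M: "qdend_bimod q UNIV s succ prec W sW ls rs lp rp"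
  shows "qdend_alg q (UNIV \<times> W) (pscale s sW) (sd_prod succ ls rs) (sd_prod prec lp rp)"
proof -
  note A = qdend_algD[OF D] and B = qdend_bimodD[OF M]
  note W = subspace_onD[OF B(1)]
  have "subspace_on (UNIV \<times> W) (pscale s sW)"
    using W unfolding subspace_on_def pscale_def by (auto simp: zero_prod_def)
  moreover have "bilinear_on (UNIV \<times> W) (pscale s sW) (sd_prod succ ls rs)"
    and "bilinear_on (UNIV \<times> W) (pscale s sW) (sd_prod prec lp rp)"
    using bilinear_on_sd_prod[OF \<open>vector_space sW\<close> B(1)] A(2,3) B(2-5) by blast+
  ultimately show ?thesis
    unfolding qdend_alg_def
    using sd_prod_qdend_identities[OF assms] by (auto simp: mem_Times_iff)
qed

lemma dast_sd_prod:
  fixes succ prec :: "'a::ab_semigroup_add \<Rightarrow> 'a \<Rightarrow> 'a"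
    and ls rs lp rp :: "'a \<Rightarrow> 'w::ab_semigroup_add \<Rightarrow> 'w"
  shows "dast (sd_prod succ ls rs) (sd_prod prec lp rp)
       = sd_prod (dast succ prec) (\<lambda>x w. ls x w + lp x w) (\<lambda>x w. rs x w + rp x w)"
  by (simp add: fun_eq_iff dast_def sd_prod_def add_ac)

lemma subspace_on_dual_space: "subspace_on (dual_space sV) (dscale :: 'k::field \<Rightarrow> _)"
  unfolding subspace_on_def dual_space_def dscale_def by (auto simp: algebra_simps)

lemma rep_map_dual_rep:
  assumes "rep_map UNIV s UNIV sV f"
  shows "rep_map UNIV s (dual_space sV) (dscale :: 'k::field \<Rightarrow> _) (dual_rep f)"
  using rep_mapD[OF assms]
  unfolding rep_map_def lin_endo_def dual_space_def dscale_def dual_rep_def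
  by (auto simp: algebra_simps fun_eq_iff)

lemma qdend_bimod_dual:
  fixes q :: "'k::field" and sV :: "'k \<Rightarrow> 'v::ab_group_add \<Rightarrow> 'v"
  assumes "q \<noteq> 0" "vector_space sV"
    and M: "qdend_bimod q UNIV s succ prec UNIV sV ls rs lp rp"
  shows "qdend_bimod q UNIV s succ prec (dual_space sV) dscale
      (\<lambda>x a. dscale (inverse (q^2)) (dual_rep rs x a + dual_rep rp x a))
      (\<lambda>x a. dscale (- (q^2)) (dual_rep lp x a))
      (\<lambda>x a. dscale (- inverse (q^2)) (dual_rep rs x a))
      (\<lambda>x a. dscale (q^2) (dual_rep ls x a + dual_rep lp x a))"
proof -
  interpret vector_space sV by fact
  note M = qdend_bimodD[OF M]
  note lin = rep_mapD[OF M(2), simplified] rep_mapD[OF M(3), simplified]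
    rep_mapD[OF M(4), simplified] rep_mapD[OF M(5), simplified]
  note dual = rep_map_dual_rep[OF M(2)] rep_map_dual_rep[OF M(3)]
    rep_map_dual_rep[OF M(4)] rep_map_dual_rep[OF M(5)]
  note rep = rep_map_scale[OF vector_space_dscale subspace_on_dual_space]
    rep_map_add[OF vector_space_dscale subspace_on_dual_space]
  txt \<open>Four of the nine identities are used inverted, so that together they form a
    terminating rewrite system.\<close>
  have inv: "rs (prec y x) w = sV (inverse q) (rp x (rs y w))"
    "rs (succ y x) w = sV (inverse q) (rs x (rs y w + rp y w))"
    "rp (dast succ prec y x) w = sV (inverse q) (rp x (rp y w))"
    "ls y (rs x w) = sV (inverse q) (rs x (ls y w + lp y w))" for x y w
    using M(8)[of x y w] M(11)[of x y w] M(13)[of x y w] M(14)[of x y w] \<open>q \<noteq> 0\<close> by simp_all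
  have dast: "rs (dast succ prec y x) w
      = sV (inverse q) (rp x (rs y w)) + sV (inverse q) (rs x (rs y w + rp y w))"
    "lp (dast succ prec x y) w = sV q (lp x (ls y w + lp y w)) + sV q (ls x (lp y w))" for x y w
    using inv M(6,9) by (simp_all add: lin dast_def)
  have mem: "a \<in> dual_space sV
      \<longleftrightarrow> (\<forall>u v. a (u + v) = a u + a v) \<and> (\<forall>c u. a (sV c u) = c * a u)" for a
    unfolding dual_space_def by simp
  show ?thesis
    unfolding qdend_bimod_def Let_def
    by (intro conjI ballI subspace_on_dual_space rep dual)
      (auto intro!: ext simp: mem dscale_def dual_rep_def M(6,7,9,10,12) inv dast lin
        field_simps \<open>q \<noteq> 0\<close> power2_eq_square)
qed

theorem mainTheorem7:
  fixes q :: "'k::field"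
    and sA :: "'k \<Rightarrow> 'a::ab_group_add \<Rightarrow> 'a"
    and sV :: "'k \<Rightarrow> 'v::ab_group_add \<Rightarrow> 'v"
    and succ prec :: "'a \<Rightarrow> 'a \<Rightarrow> 'a"
    and ls rs lp rp :: "'a \<Rightarrow> 'v \<Rightarrow> 'v"
  defines "Vd \<equiv> dual_space sV"
    and "lsd \<equiv> dual_rep ls" and "rsd \<equiv> dual_rep rs"
    and "lpd \<equiv> dual_rep lp" and "rpd \<equiv> dual_rep rp"
  assumes q0: "q \<noteq> 0"
    and vsA: "is_vspace sA" and vsV: "is_vspace sV"
    and dend: "qdend_alg q UNIV sA succ prec"
    and bimod: "qdend_bimod q UNIV sA succ prec UNIV sV ls rs lp rp"
  shows
    \<comment> \<open>(1)\<close>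
    "qdend_bimod q UNIV sA succ prec Vd dscale
        (\<lambda>x a. dscale (inverse (q^2)) (rsd x a + rpd x a))
        (\<lambda>x a. dscale (- (q^2)) (lpd x a))
        (\<lambda>x a. dscale (- inverse (q^2)) (rsd x a))
        (\<lambda>x a. dscale (q^2) (lsd x a + lpd x a))
     \<comment> \<open>(2)\<close>
   \<and> qdend_bimod q UNIV sA succ prec Vd dscale
        (\<lambda>x a. dscale (inverse (q^2)) (rsd x a + rpd x a))
        (\<lambda>x a. 0) (\<lambda>x a. 0)
        (\<lambda>x a. dscale (q^2) (lsd x a + lpd x a))
   \<and> qdend_bimod q UNIV sA succ prec Vd dscale
        (\<lambda>x a. dscale (inverse (q^2)) (rpd x a))
        (\<lambda>x a. 0) (\<lambda>x a. 0)
        (\<lambda>x a. dscale (q^2) (lsd x a))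
     \<comment> \<open>(3)\<close>
   \<and> qassoc_bimod q UNIV sA (dast succ prec) Vd dscale
        (\<lambda>x a. dscale (inverse (q^2)) (rsd x a + rpd x a))
        (\<lambda>x a. dscale (q^2) (lsd x a + lpd x a))
   \<and> qassoc_bimod q UNIV sA (dast succ prec) Vd dscale
        (\<lambda>x a. dscale (inverse (q^2)) (rpd x a))
        (\<lambda>x a. dscale (q^2) (lsd x a))
     \<comment> \<open>(4)\<close>
   \<and> (let S = UNIV \<times> Vd; sP = pscale sA dscale;
          succ1 = sd_prod succ (\<lambda>x a. dscale (inverse (q^2)) (rsd x a + rpd x a))
                               (\<lambda>x a. dscale (- (q^2)) (lpd x a));
          prec1 = sd_prod prec (\<lambda>x a. dscale (- inverse (q^2)) (rsd x a))
                               (\<lambda>x a. dscale (q^2) (lsd x a + lpd x a));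
          succ2 = sd_prod succ (\<lambda>x a. dscale (inverse (q^2)) (rpd x a)) (\<lambda>x a. 0);
          prec2 = sd_prod prec (\<lambda>x a. 0) (\<lambda>x a. dscale (q^2) (lsd x a));
          ast0 = sd_prod (dast succ prec) (\<lambda>x a. dscale (inverse (q^2)) (rpd x a))
                               (\<lambda>x a. dscale (q^2) (lsd x a))
      in qdend_alg q S sP succ1 prec1 \<and> qdend_alg q S sP succ2 prec2
         \<and> qassoc_alg q S sP ast0
         \<and> (\<forall>p\<in>S. \<forall>p'\<in>S. dast succ1 prec1 p p' = ast0 p p' \<and> dast succ2 prec2 p p' = ast0 p p'))"
proof -
  have vA: "vector_space sA" and vV: "vector_space sV"
    using vsA vsV unfolding is_vspace_def by auto
  note vD = vector_space_dscale[where 'k = 'k and 'v = 'v]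
  have sums: "(\<lambda>x a. dscale (inverse (q^2)) (rsd x a + rpd x a) + dscale (- inverse (q^2)) (rsd x a))
        = (\<lambda>x a. dscale (inverse (q^2)) (rpd x a))"
      "(\<lambda>x a. dscale (- (q^2)) (lpd x a) + dscale (q^2) (lsd x a + lpd x a))
        = (\<lambda>x a. dscale (q^2) (lsd x a))"
    by (simp_all add: fun_eq_iff dscale_def algebra_simps)
  note P1 = qdend_bimod_dual[OF q0 vV bimod, folded Vd_def lsd_def rsd_def lpd_def rpd_def]
  note P3a = qdend_bimod_imp_qassoc_bimod_succ_prec[OF q0 vD P1]
    and P3b = qdend_bimod_imp_qassoc_bimod_sum[OF q0 vD P1, unfolded sums]
  note P2a = qassoc_bimod_imp_qdend_bimod[OF q0 vD P3a]
    and P2b = qassoc_bimod_imp_qdend_bimod[OF q0 vD P3b]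
  note D1 = qdend_alg_sd_prod[OF q0 vD dend P1]
    and D2 = qdend_alg_sd_prod[OF q0 vD dend P2b]
  note A0 = qdend_alg_imp_qassoc_alg[OF q0 vector_space_pscale[OF vA vD] D2]
  show ?thesis
    using P1 P2a P2b P3a P3b D1 D2 A0 unfolding Let_def dast_sd_prod sums by simp
qed

end
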